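(* Let $i\ge0$, let $\mathbf{e}_i$ be a 1-dimensional error pattern at level $i$, and let $\mathbf{e}_{i+2}$ be a 1-dimensional second preimage of $\mathbf{e}_i$, i.e. a pattern at level $i+2$ whose image after two successive reduction stages is $\mathbf{e}_i$. Then $\mathrm{wt}(\mathbf{e}_{i+2})\ge2\,\mathrm{wt}(\mathbf{e}_i)$.
   Context: 1-dimensional model. For $j\ge0$, the line at level $j$ is the cycle with vertex set $\mathbb{Z}/2^j\mathbb{Z}$ and edges $\{v,v+1\}$, $v\in\mathbb{Z}/2^j\mathbb{Z}$ (for $j=0$, one vertex with a loop edge). A 1-dimensional error pattern at level $j$ is a subset of these edges; $\mathrm{wt}$ is its number of edges; its syndrome is the set of vertices incident to an odd number of its edges. At level $j+1$, block $m\in\mathbb{Z}/2^j\mathbb{Z}$ consists of the left edge $\{2m,2m+1\}$ and right edge $\{2m+1,2m+2\}$ and corresponds to the edge $\{m,m+1\}$ at level $j$. One reduction stage applied to a pattern $\mathbf{f}$ at level $j+1$ with syndrome $S$: (a) for every block, if $2m+1,2m+2\in S$, flip (add mod 2) the right edge and remove both from $S$; (b) then for every block, if $2m+1$ is still in $S$, flip the left edge. In the resulting pattern $\mathbf{f}'$ each block contains $0$ or $2$ edges; the image of $\mathbf{f}$ is the pattern at level $j$ containing $\{m,m+1\}$ iff block $m\subseteq\mathbf{f}'$. *)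

theory Defs
  imports Main
begin

text \<open>Level j: the cycle with vertex set Z/2^j (represented by 0..<2^j).
  Edges are indexed by their left endpoint: edge v (v < 2^j) is {v, v+1 mod 2^j}.
  (Level 0: one vertex, one loop edge; level 1: two parallel edges.)
  A 1-dimensional error pattern at level j is a set of edge indices below 2^j.\<close>

definition is_pattern :: "nat \<Rightarrow> nat set \<Rightarrow> bool" where
  "is_pattern j f \<longleftrightarrow> f \<subseteq> {..<2^j}"

definition wt :: "nat set \<Rightarrow> nat" where
  "wt f = card f"

text \<open>Syndrome: vertices u incident to an odd number of edges of f; the edges
  incident to u are edge (u-1) and edge u (a loop counts twice).\<close>
definition syndrome :: "nat \<Rightarrow> nat set \<Rightarrow> nat set" where
  "syndrome j f = {u. u < 2^j \<and>
     odd ((if (u + 2^j - 1) mod 2^j \<in> f then 1 else 0) + (if u \<in> f then 1 else 0 :: nat))}"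

definition symdiff :: "nat set \<Rightarrow> nat set \<Rightarrow> nat set" where
  "symdiff A B = (A - B) \<union> (B - A)"

text \<open>One reduction stage applied to a pattern f at level j+1; block m < 2^j
  consists of left edge 2m = {2m,2m+1} and right edge 2m+1 = {2m+1,2m+2}.\<close>
definition stepA_blocks :: "nat \<Rightarrow> nat set \<Rightarrow> nat set" where
  "stepA_blocks j f = {m. m < 2^j \<and> 2*m+1 \<in> syndrome (Suc j) f
        \<and> (2*m+2) mod 2^(Suc j) \<in> syndrome (Suc j) f}"

definition syndrome_after_A :: "nat \<Rightarrow> nat set \<Rightarrow> nat set" where
  "syndrome_after_A j f = syndrome (Suc j) f
      - (\<Union>m\<in>stepA_blocks j f. {2*m+1, (2*m+2) mod 2^(Suc j)})"

definition stepB_blocks :: "nat \<Rightarrow> nat set \<Rightarrow> nat set" where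
  "stepB_blocks j f = {m. m < 2^j \<and> 2*m+1 \<in> syndrome_after_A j f}"

definition reduced :: "nat \<Rightarrow> nat set \<Rightarrow> nat set" where
  "reduced j f = symdiff f ((\<lambda>m. 2*m+1) ` stepA_blocks j f \<union> (\<lambda>m. 2*m) ` stepB_blocks j f)"

definition reduce :: "nat \<Rightarrow> nat set \<Rightarrow> nat set" where
  "reduce j f = {m. m < 2^j \<and> 2*m \<in> reduced j f \<and> 2*m+1 \<in> reduced j f}"

end

(* If block m survives a reduction stage, the preimage contains both edges of the block, or
   one of them together with the edge following the block. Let g be the intermediate pattern
   at level i+1 and count the vertices touched by g. Each of them can be charged injectively
   to an edge of e_{i+2} lying in its own block or at the end of the preceding block, so
   wt e_{i+2} is at least this count. Conversely every edge m of e_i forces the middle vertex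
   2m+1 and the end vertex 2m+2 of block m to be touched by g, so the count is at least
   2 wt e_i. *)

theory Submission
  imports Defs
begin

lemma pred_Suc_mod:
  fixes k N :: nat
  assumes "k < N"
  shows "(Suc k mod N + N - 1) mod N = k"
proof (cases "Suc k = N")
  case False
  with assms have "Suc k mod N + N - 1 = k + N" by simp
  with assms show ?thesis by simp
qed simp

lemma Suc_pred_mod:
  fixes k N :: nat
  assumes "k < N"
  shows "Suc ((k + N - 1) mod N) mod N = k"
proof (cases "k = 0")
  case False
  then have "k + N - 1 = (k - 1) + N" by simp
  then have "(k + N - 1) mod N = k - 1"
    using assms by (simp only: mod_add_self2) simp
  with False show ?thesis
    using assms by simp
qed (use assms in simp)

lemma Suc_mod_mem_syndrome_iff:
  assumes "k < 2^j"
  shows "Suc k mod 2^j \<in> syndrome j f \<longleftrightarrow>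
    odd ((if k \<in> f then 1 else 0) + (if Suc k mod 2^j \<in> f then 1 else 0 :: nat))"
  using assms pred_Suc_mod[OF assms] by (simp add: syndrome_def)

lemma even_mem_reduced_iff: "2*m \<in> reduced j f \<longleftrightarrow> (2*m \<in> f \<longleftrightarrow> m \<notin> stepB_blocks j f)"
  unfolding reduced_def symdiff_def by auto presburger+

lemma odd_mem_reduced_iff: "2*m+1 \<in> reduced j f \<longleftrightarrow> (2*m+1 \<in> f \<longleftrightarrow> m \<notin> stepA_blocks j f)"
  unfolding reduced_def symdiff_def by auto presburger+

lemma stepA_blocks_disjoint_stepB_blocks: "stepA_blocks j f \<inter> stepB_blocks j f = {}"
  by (auto simp: stepB_blocks_def syndrome_after_A_def)

definition vertex_support :: "nat \<Rightarrow> nat set \<Rightarrow> nat set" where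
  "vertex_support N g = {k. k < N \<and> (k \<in> g \<or> (k + N - 1) mod N \<in> g)}"

definition covers_block :: "nat \<Rightarrow> nat set \<Rightarrow> nat \<Rightarrow> bool" where
  "covers_block M f m \<longleftrightarrow>
     (2*m \<in> f \<and> 2*m+1 \<in> f) \<or> ((2*m \<in> f \<or> 2*m+1 \<in> f) \<and> (2*m+2) mod M \<in> f)"

lemma covers_block_if_mem_reduce:
  assumes "m \<in> reduce j f"
  shows "covers_block (2^Suc j) f m"
proof -
  let ?u = "(2*m+2) mod 2^Suc j"
  have m: "m < 2^j" and "2*m \<in> reduced j f" and "2*m+1 \<in> reduced j f"
    using assms by (auto simp: reduce_def)
  then have left: "2*m \<in> f \<longleftrightarrow> m \<notin> stepB_blocks j f"
    and right: "2*m+1 \<in> f \<longleftrightarrow> m \<notin> stepA_blocks j f"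
    by (simp_all only: even_mem_reduced_iff odd_mem_reduced_iff)
  have lt: "2*m < 2^Suc j" "2*m+1 < 2^Suc j"
    using m by simp_all
  have syn_mid: "2*m+1 \<in> syndrome (Suc j) f \<longleftrightarrow> (2*m \<in> f \<longleftrightarrow> 2*m+1 \<notin> f)"
    using Suc_mod_mem_syndrome_iff[OF lt(1), of f] lt(2) by auto
  have syn_u: "?u \<in> syndrome (Suc j) f \<longleftrightarrow> (2*m+1 \<in> f \<longleftrightarrow> ?u \<notin> f)"
    using Suc_mod_mem_syndrome_iff[OF lt(2), of f] by auto
  have A: "m \<in> stepA_blocks j f \<longleftrightarrow> 2*m+1 \<in> syndrome (Suc j) f \<and> ?u \<in> syndrome (Suc j) f"
    using m by (simp add: stepA_blocks_def)
  have B: "m \<in> stepB_blocks j f \<Longrightarrow> 2*m+1 \<in> syndrome (Suc j) f"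
    by (simp add: stepB_blocks_def syndrome_after_A_def)
  have AB: "m \<in> stepA_blocks j f \<Longrightarrow> m \<notin> stepB_blocks j f"
    using stepA_blocks_disjoint_stepB_blocks by blast
  show ?thesis
  proof (cases "m \<in> stepA_blocks j f")
    case True
    then have "2*m \<in> f" "2*m+1 \<notin> f" "?u \<in> syndrome (Suc j) f"
      using AB left right A by simp_all
    then show ?thesis using syn_u by (simp add: covers_block_def)
  next
    case notA: False
    then have "2*m+1 \<in> f" using right by simp
    show ?thesis
    proof (cases "2*m \<in> f")
      case False
      then have "2*m+1 \<in> syndrome (Suc j) f" using left B by simp
      then have "?u \<notin> syndrome (Suc j) f" using notA A by simp
      then show ?thesis using syn_u \<open>2*m+1 \<in> f\<close> by (simp add: covers_block_def)
    qed (use \<open>2*m+1 \<in> f\<close> in \<open>simp add: covers_block_def\<close>)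
  qed
qed

lemma card_vertex_support_le:
  assumes "finite f" and covers: "\<forall>k\<in>g. covers_block (2*N) f k"
  shows "card (vertex_support N g) \<le> card f"
proof -
  let ?V = "vertex_support N g"
  define p where "p k = (k + N - 1) mod N" for k
  have next_edge: "(2 * p k + 2) mod (2*N) = 2*k" if "k < N" for k
    using Suc_pred_mod[OF that] mod_mult_mult1[of 2 "Suc (p k)" N] by (simp add: p_def)
  text \<open>Charge a vertex to an edge of f inside its own block, except when the
    vertex is only the right end of a fully occupied block.\<close>
  define \<phi> where "\<phi> k = (if 2*k \<in> f then 2*k else if k \<in> g then 2*k+1 else 2 * p k + 1)" for k
  have "\<phi> k \<in> f \<and> (2*k \<notin> f \<and> k \<notin> g \<longrightarrow> 2 * p k \<in> f)" if "k \<in> ?V" for k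
  proof (cases "k \<in> g")
    case False
    with that have "k < N" "p k \<in> g" by (auto simp: vertex_support_def p_def)
    with False covers next_edge show ?thesis by (auto simp: \<phi>_def covers_block_def)
  qed (use covers in \<open>auto simp: \<phi>_def covers_block_def\<close>)
  then have into: "\<phi> ` ?V \<subseteq> f"
    and prev: "\<And>k. k \<in> ?V \<Longrightarrow> 2*k \<notin> f \<Longrightarrow> k \<notin> g \<Longrightarrow> 2 * p k \<in> f"
    by blast+
  have p_inj: "p a = p b \<Longrightarrow> a \<in> ?V \<Longrightarrow> b \<in> ?V \<Longrightarrow> a = b" for a b
    using Suc_pred_mod[of a N] Suc_pred_mod[of b N] by (auto simp: p_def vertex_support_def)
  have "inj_on \<phi> ?V"
  proof (rule inj_onI)
    fix a b assume a: "a \<in> ?V" and b: "b \<in> ?V" and eq: "\<phi> a = \<phi> b"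
    have shape: "(2*k \<in> f \<and> \<phi> k = 2*k) \<or> (2*k \<notin> f \<and> k \<in> g \<and> \<phi> k = 2*k+1)
        \<or> (2*k \<notin> f \<and> k \<notin> g \<and> \<phi> k = 2 * p k + 1)" for k
      by (auto simp: \<phi>_def)
    show "a = b"
      using shape[of a] shape[of b] eq prev[OF a] prev[OF b] p_inj[OF _ a b]
      by auto presburger+
  qed
  then show ?thesis
    using card_inj_on_le into \<open>finite f\<close> by blast
qed

lemma two_card_le_card_vertex_support:
  assumes h: "h \<subseteq> {..<K}" and covers: "\<forall>m\<in>h. covers_block (2*K) g m"
  shows "2 * card h \<le> card (vertex_support (2*K) g)"
proof -
  let ?mid = "\<lambda>m. 2*m+1" and ?right = "\<lambda>m. (2*m+2) mod (2*K)"
  have right_eq: "?right m = 2 * (Suc m mod K)" for m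
    using mod_mult_mult1[of 2 "Suc m" K] by simp
  have "?mid m \<in> vertex_support (2*K) g \<and> ?right m \<in> vertex_support (2*K) g" if "m \<in> h" for m
  proof -
    have "2*m+1 < 2*K" "?right m < 2*K" using that h by auto
    moreover have "(?mid m + 2*K - 1) mod (2*K) = 2*m" "(?right m + 2*K - 1) mod (2*K) = 2*m+1"
      using pred_Suc_mod[of "2*m" "2*K"] pred_Suc_mod[of "2*m+1" "2*K"] \<open>2*m+1 < 2*K\<close> by simp_all
    ultimately show ?thesis
      using covers that unfolding vertex_support_def covers_block_def by auto
  qed
  then have sub: "?mid ` h \<union> ?right ` h \<subseteq> vertex_support (2*K) g" by blast
  have "inj_on ?right h"
  proof (rule inj_onI)
    fix a b assume "a \<in> h" "b \<in> h" "?right a = ?right b"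
    then have "Suc a mod K = Suc b mod K" and "a < K" "b < K" using h right_eq by auto
    then show "a = b" using pred_Suc_mod by metis
  qed
  moreover have "?mid ` h \<inter> ?right ` h = {}"
  proof -
    have "2*a+1 \<noteq> 2*c" for a c :: nat
      by presburger
    then show ?thesis
      unfolding right_eq by blast
  qed
  moreover have "finite h" using h finite_subset by blast
  ultimately have "card (?mid ` h \<union> ?right ` h) = 2 * card h"
    by (simp add: card_Un_disjoint card_image inj_on_def)
  then show ?thesis
    using card_mono[OF _ sub] by (simp add: vertex_support_def)
qed

theorem lemma3:
  fixes i :: nat and e e2 :: "nat set"
  assumes "is_pattern i e"
    and "is_pattern (i+2) e2"
    and "reduce i (reduce (Suc i) e2) = e"
  shows "wt e2 \<ge> 2 * wt e"
proof -
  define g where "g = reduce (Suc i) e2"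
  have "finite e2"
    using assms(2) by (auto simp: is_pattern_def intro: finite_subset)
  then have "card (vertex_support (2^Suc i) g) \<le> card e2"
    using covers_block_if_mem_reduce[of _ "Suc i" e2]
    by (intro card_vertex_support_le) (simp_all add: g_def)
  moreover have "2 * card e \<le> card (vertex_support (2 * 2^i) g)"
    using covers_block_if_mem_reduce[of _ i g] assms(3)
    by (intro two_card_le_card_vertex_support) (auto simp: g_def reduce_def)
  ultimately show ?thesis by (simp add: wt_def)
qed

end
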